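(* Let $r\ge3$. For every $P\in\mathbf W_{N,r}$, $$\pi(-P)\,E^{(r-1)}_{N,r}=\pi(P)\,F_{N,r}.$$
   Context: For integers $N,r\ge1$ let $S_{N,r}=\{(n_1,\dots,n_r)\in\mathbb Z^r:\ n_1+\dots+n_r=N,\ \text{each } n_i\ge3 \text{ odd}\}$; when used as an index set it is ordered lexicographically decreasingly. For $m=(m_1,\dots,m_r)$ and $n=(n_1,\dots,n_r)$ let $\delta\binom{m}{n}=1$ if $m_i=n_i$ for all $i$, and $0$ otherwise. $\mathbf V_{N,r}$ is the $\mathbb Q$-span of the monomials $x_1^{n_1-1}\cdots x_r^{n_r-1}$ with $(n_1,\dots,n_r)\in S_{N,r}$. $\mathsf{Vect}_{N,r}=\mathbb Q^{S_{N,r}}$ (row vectors), and $\pi:\mathbf V_{N,r}\to\mathsf{Vect}_{N,r}$ is the isomorphism sending $\sum a_{n_1,\dots,n_r}x_1^{n_1-1}\cdots x_r^{n_r-1}$ to $(a_{n_1,\dots,n_r})_{(n_1,\dots,n_r)\in S_{N,r}}$. For $r\ge2$, $\mathbf W_{N,r}=\{P\in\mathbf V_{N,r}: P(x_1,\dots,x_r)=P(x_2-x_1,x_2,x_3,\dots,x_r)-P(x_2-x_1,x_1,x_3,\dots,x_r)\}$. Ihara action: for $f\in\mathbb Q[t]$ and a polynomial $g$ in $r-1$ variables, $(f\mathbin{\underline\circ}g)(x_1,\dots,x_r)=f(x_1)g(x_2,\dots,x_r)+\sum_{i=1}^{r-1}\big(f(x_{i+1}-x_i)g(x_1,\dots,\widehat{x_{i+1}},\dots,x_r)-(-1)^{\deg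 f}f(x_i-x_{i+1})g(x_1,\dots,\widehat{x_i},\dots,x_r)\big)$ (hats denote omitted variables). For positive integers $m_i,n_i$, $e\binom{m_1,\dots,m_r}{n_1,\dots,n_r}$ is the coefficient of $x_1^{n_1-1}\cdots x_r^{n_r-1}$ in $t^{m_1-1}\mathbin{\underline\circ}\,(y_1^{m_2-1}\cdots y_{r-1}^{m_r-1})$. $E_{N,r}$ is the $S_{N,r}\times S_{N,r}$ matrix with $(m,n)$-entry $e\binom{m}{n}$. For $2\le j\le r$, $E^{(j)}_{N,r}$ is the $S_{N,r}\times S_{N,r}$ matrix with $(m,n)$-entry $\delta\binom{m_1,\dots,m_{r-j}}{n_1,\dots,n_{r-j}}\,e\binom{m_{r-j+1},\dots,m_r}{n_{r-j+1},\dots,n_r}$. $F_{N,r}=E_{N,r}-\mathrm{id}$. *)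

theory Defs
  imports Main "HOL-Library.Poly_Mapping" "HOL-Computational_Algebra.Polynomial"
begin

text \<open>Multivariate polynomials over Q: variables x_1, x_2, ... are represented by
  indices 0, 1, ...; a monomial is an exponent vector (a finitely supported nat-valued map).\<close>
type_synonym mpoly = "(nat \<Rightarrow>\<^sub>0 nat) \<Rightarrow>\<^sub>0 rat"

definition Var :: "nat \<Rightarrow> mpoly" where
  "Var i = Poly_Mapping.single (Poly_Mapping.single i 1) 1"

definition Const :: "rat \<Rightarrow> mpoly" where
  "Const c = Poly_Mapping.single 0 c"

definition subst :: "(nat \<Rightarrow> mpoly) \<Rightarrow> mpoly \<Rightarrow> mpoly" where
  "subst \<sigma> p = sum (\<lambda>a. Const (Poly_Mapping.lookup p a) * prod (\<lambda>i. \<sigma> i ^ Poly_Mapping.lookup a i) (Poly_Mapping.keys a)) (Poly_Mapping.keys p)"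

definition upoly_at :: "rat poly \<Rightarrow> mpoly \<Rightarrow> mpoly" where
  "upoly_at f q = (\<Sum>k\<le>degree f. Const (coeff f k) * q ^ k)"

definition expo :: "nat list \<Rightarrow> (nat \<Rightarrow>\<^sub>0 nat)" where
  "expo n = (\<Sum>i<length n. Poly_Mapping.single i (n ! i - 1))"

definition mono :: "nat list \<Rightarrow> mpoly" where
  "mono n = Poly_Mapping.single (expo n) 1"

definition S :: "nat \<Rightarrow> nat \<Rightarrow> nat list set" where
  "S N r = {n. length n = r \<and> sum_list n = N \<and> (\<forall>i<r. odd (n ! i) \<and> 3 \<le> n ! i)}"

definition V :: "nat \<Rightarrow> nat \<Rightarrow> mpoly set" where
  "V N r = {P. Poly_Mapping.keys P \<subseteq> expo ` S N r}"

definition W :: "nat \<Rightarrow> nat \<Rightarrow> mpoly set" where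
  "W N r = {P \<in> V N r.
     P = subst (\<lambda>i. if i = 0 then Var 1 - Var 0 else Var i) P
       - subst (\<lambda>i. if i = 0 then Var 1 - Var 0 else if i = 1 then Var 0 else Var i) P}"

definition piv :: "mpoly \<Rightarrow> nat list \<Rightarrow> rat" where
  "piv P n = Poly_Mapping.lookup P (expo n)"

text \<open>Ihara action t-circ: f in Q[t], g a polynomial in r-1 variables (x_1..x_{r-1}),
  the result is a polynomial in r variables x_1..x_r (indices 0..r-1).
  The sum index i ranges over 1..r-1 as in the paper (1-based x_i = Var (i-1)).\<close>
definition ihara :: "nat \<Rightarrow> rat poly \<Rightarrow> mpoly \<Rightarrow> mpoly" where
  "ihara r f g =
     upoly_at f (Var 0) * subst (\<lambda>j. Var (Suc j)) g
     + (\<Sum>i\<in>{1..r-1}.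
          upoly_at f (Var i - Var (i - 1)) * subst (\<lambda>j. if j < i then Var j else Var (Suc j)) g
        - (-1) ^ degree f * upoly_at f (Var (i - 1) - Var i)
            * subst (\<lambda>j. if j < i - 1 then Var j else Var (Suc j)) g)"

definition e :: "nat list \<Rightarrow> nat list \<Rightarrow> rat" where
  "e m n = Poly_Mapping.lookup (ihara (length m) (monom 1 (hd m - 1)) (mono (tl m))) (expo n)"

text \<open>Matrices indexed by S_{N,r} x S_{N,r}, as functions of (row, column).\<close>
definition Emat :: "nat list \<Rightarrow> nat list \<Rightarrow> rat" where
  "Emat m n = e m n"

definition Ej :: "nat \<Rightarrow> nat \<Rightarrow> nat list \<Rightarrow> nat list \<Rightarrow> rat" where
  "Ej r j m n = (if take (r - j) m = take (r - j) n then e (drop (r - j) m) (drop (r - j) n) else 0)"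

definition Fmat :: "nat list \<Rightarrow> nat list \<Rightarrow> rat" where
  "Fmat m n = Emat m n - (if m = n then 1 else 0)"

definition vecmat :: "nat \<Rightarrow> nat \<Rightarrow> (nat list \<Rightarrow> rat) \<Rightarrow> (nat list \<Rightarrow> nat list \<Rightarrow> rat) \<Rightarrow> nat list \<Rightarrow> rat" where
  "vecmat N r v M n = (\<Sum>m\<in>S N r. v m * M m n)"

end

theory Submission
  imports Defs
begin

text \<open>
  Weighting row m of E by the coefficient a_m of P gives the polynomial
  \<Phi> = \<Sum>_m a_m (t^(m_1-1) \<circ> y_1^(m_2-1)\<cdots>y_(r-1)^(m_r-1)), and weighting row m of E^(r-1) gives
  \<Psi> = \<Sum>_m a_m x_1^(m_1-1) (t^(m_2-1) \<circ> y_1^(m_3-1)\<cdots>y_(r-2)^(m_r-1))(x_2,\<dots>,x_r).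
  All exponents m_i - 1 are even, so each summand of the Ihara action on x^(m-1) is a difference of
  two substitutions into x^(m-1), and summing against the a_m turns \<Phi> into P + \<Sum>_(i=1..r-1) f_i,
  where f_i is the corresponding difference of substitutions into P. The summands of \<Psi> are the
  substitutions of f_(i+1) with x_1 and x_2 exchanged, and P is antisymmetric in x_1, x_2 (apply the
  exchange to the defining equation of W, x_1 occurring only to even powers), so
  \<Psi> = P - \<Sum>_(i=2..r-1) f_i. Since f_1 = -P is the defining equation of W itself, \<Phi> + \<Psi> = P,
  and comparing coefficients gives the matrix identity.
\<close>

section \<open>Substitution is a ring homomorphism\<close>

lemma Const_0 [simp]: "Const 0 = 0"
  by (simp add: Const_def)

lemma Const_1 [simp]: "Const 1 = 1"
  by (simp add: Const_def)

lemma Const_add: "Const (a + b) = Const a + Const b"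
  by (simp add: Const_def single_add)

lemma Const_mult: "Const (a * b) = Const a * Const b"
  by (simp add: Const_def mult_single)

lemma lookup_Const_mult: "Poly_Mapping.lookup (Const c * p) k = c * Poly_Mapping.lookup p k"
proof -
  have "Const c * p = Poly_Mapping.map ((*) c) p"
    by (simp add: Const_def mult_map_scale_conv_mult)
  then show ?thesis
    by (simp add: map.rep_eq when_def)
qed

lemma keys_Const_mult: "Poly_Mapping.keys (Const c * p) \<subseteq> Poly_Mapping.keys p"
  by (auto simp: in_keys_iff lookup_Const_mult)

lemma single_eq_Const_mult: "Poly_Mapping.single a c = Const c * Poly_Mapping.single a 1"
  by (simp add: Const_def mult_single)

lemma poly_mapping_sum_single:
  "p = (\<Sum>a\<in>Poly_Mapping.keys p. Poly_Mapping.single a (Poly_Mapping.lookup p a))"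
proof (rule poly_mapping_eqI)
  fix k
  show "Poly_Mapping.lookup p k
      = Poly_Mapping.lookup (\<Sum>a\<in>Poly_Mapping.keys p. Poly_Mapping.single a (Poly_Mapping.lookup p a)) k"
    by (cases "k \<in> Poly_Mapping.keys p") (simp_all add: lookup_sum lookup_single when_def in_keys_iff)
qed

definition subst_monomial :: "(nat \<Rightarrow> mpoly) \<Rightarrow> (nat \<Rightarrow>\<^sub>0 nat) \<Rightarrow> mpoly" where
  "subst_monomial \<sigma> a = (\<Prod>i\<in>Poly_Mapping.keys a. \<sigma> i ^ Poly_Mapping.lookup a i)"

lemma subst_monomial_superset:
  assumes "finite I" "Poly_Mapping.keys a \<subseteq> I"
  shows "subst_monomial \<sigma> a = (\<Prod>i\<in>I. \<sigma> i ^ Poly_Mapping.lookup a i)"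
  unfolding subst_monomial_def
  by (rule prod.mono_neutral_left) (use assms in \<open>auto simp: in_keys_iff\<close>)

lemma subst_monomial_add: "subst_monomial \<sigma> (a + b) = subst_monomial \<sigma> a * subst_monomial \<sigma> b"
proof -
  let ?I = "Poly_Mapping.keys a \<union> Poly_Mapping.keys b"
  have I: "finite ?I" by simp
  have "subst_monomial \<sigma> (a + b) = (\<Prod>i\<in>?I. \<sigma> i ^ Poly_Mapping.lookup (a + b) i)"
    by (rule subst_monomial_superset[OF I keys_add])
  also have "\<dots> = (\<Prod>i\<in>?I. \<sigma> i ^ Poly_Mapping.lookup a i) * (\<Prod>i\<in>?I. \<sigma> i ^ Poly_Mapping.lookup b i)"
    by (simp add: lookup_add power_add prod.distrib)
  also have "\<dots> = subst_monomial \<sigma> a * subst_monomial \<sigma> b"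
    by (simp add: subst_monomial_superset[OF I])
  finally show ?thesis .
qed

lemma subst_superset:
  assumes "finite A" "Poly_Mapping.keys p \<subseteq> A"
  shows "subst \<sigma> p = (\<Sum>a\<in>A. Const (Poly_Mapping.lookup p a) * subst_monomial \<sigma> a)"
  unfolding subst_def subst_monomial_def[symmetric]
  by (rule sum.mono_neutral_left) (use assms in \<open>auto simp: in_keys_iff\<close>)

lemma subst_single: "subst \<sigma> (Poly_Mapping.single a c) = Const c * subst_monomial \<sigma> a"
  by (simp add: subst_def subst_monomial_def)

lemma subst_0 [simp]: "subst \<sigma> 0 = 0"
  by (simp add: subst_def)

lemma subst_1 [simp]: "subst \<sigma> 1 = 1"
  by (simp add: subst_def subst_monomial_def)

lemma subst_Const [simp]: "subst \<sigma> (Const c) = Const c"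
  using subst_single[of \<sigma> 0 c] by (simp add: Const_def subst_monomial_def)

lemma subst_Var [simp]: "subst \<sigma> (Var i) = \<sigma> i"
  by (simp add: Var_def subst_single subst_monomial_def Const_def)

lemma subst_add: "subst \<sigma> (p + q) = subst \<sigma> p + subst \<sigma> q"
proof -
  let ?I = "Poly_Mapping.keys p \<union> Poly_Mapping.keys q"
  show ?thesis
    using keys_add[of p q]
    by (simp add: subst_superset[of ?I] lookup_add Const_add distrib_right sum.distrib)
qed

lemma subst_sum: "subst \<sigma> (sum f A) = (\<Sum>x\<in>A. subst \<sigma> (f x))"
  by (induction A rule: infinite_finite_induct) (simp_all add: subst_add)

lemma subst_uminus: "subst \<sigma> (- p) = - subst \<sigma> p"
  using subst_add[of \<sigma> "- p" p] by (simp add: eq_neg_iff_add_eq_0)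

lemma subst_diff: "subst \<sigma> (p - q) = subst \<sigma> p - subst \<sigma> q"
  using subst_add[of \<sigma> p "- q"] subst_uminus[of \<sigma> q] by simp

lemma subst_Const_mult: "subst \<sigma> (Const c * p) = Const c * subst \<sigma> p"
proof -
  have K: "finite (Poly_Mapping.keys p)" by simp
  show ?thesis
    by (simp add: subst_superset[OF K keys_Const_mult] subst_superset[OF K order_refl]
        lookup_Const_mult Const_mult sum_distrib_left mult.assoc)
qed

lemma subst_mult: "subst \<sigma> (p * q) = subst \<sigma> p * subst \<sigma> q"
proof -
  let ?s = "\<lambda>p a. Poly_Mapping.single a (Poly_Mapping.lookup p a)"
  have "p * q = (\<Sum>a\<in>Poly_Mapping.keys p. \<Sum>b\<in>Poly_Mapping.keys q. ?s p a * ?s q b)"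
    by (subst poly_mapping_sum_single[of p], subst poly_mapping_sum_single[of q]) (simp add: sum_product)
  then have "subst \<sigma> (p * q) = (\<Sum>a\<in>Poly_Mapping.keys p. \<Sum>b\<in>Poly_Mapping.keys q.
      (Const (Poly_Mapping.lookup p a) * subst_monomial \<sigma> a)
      * (Const (Poly_Mapping.lookup q b) * subst_monomial \<sigma> b))"
    by (simp add: subst_sum mult_single subst_single subst_monomial_add Const_mult ac_simps)
  also have "\<dots> = subst \<sigma> p * subst \<sigma> q"
    by (simp add: subst_def subst_monomial_def sum_product)
  finally show ?thesis .
qed

lemma subst_power: "subst \<sigma> (p ^ k) = subst \<sigma> p ^ k"
  by (induction k) (simp_all add: subst_mult)

lemma subst_prod: "subst \<sigma> (prod f A) = (\<Prod>x\<in>A. subst \<sigma> (f x))"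
  by (induction A rule: infinite_finite_induct) (simp_all add: subst_mult)

lemma subst_subst: "subst \<sigma> (subst \<tau> p) = subst (\<lambda>i. subst \<sigma> (\<tau> i)) p"
proof -
  have "subst \<sigma> (subst_monomial \<tau> a) = subst_monomial (\<lambda>i. subst \<sigma> (\<tau> i)) a" for a
    by (simp add: subst_monomial_def subst_prod subst_power)
  then show ?thesis
    unfolding subst_def[of \<tau>] subst_monomial_def[symmetric]
    by (simp add: subst_sum subst_mult) (simp add: subst_def subst_monomial_def)
qed

section \<open>The monomials x^(n-1) and the space V\<close>

lemma lookup_expo: "Poly_Mapping.lookup (expo n) i = (if i < length n then n ! i - 1 else 0)"
  by (auto simp: expo_def lookup_sum lookup_single when_def)

lemma keys_expo: "Poly_Mapping.keys (expo n) \<subseteq> {..<length n}"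
  by (auto simp: in_keys_iff lookup_expo split: if_splits)

lemma subst_mono: "subst \<sigma> (mono n) = (\<Prod>i<length n. \<sigma> i ^ (n ! i - 1))"
proof -
  have "subst \<sigma> (mono n) = subst_monomial \<sigma> (expo n)"
    by (simp add: mono_def subst_single Const_def)
  also have "\<dots> = (\<Prod>i<length n. \<sigma> i ^ Poly_Mapping.lookup (expo n) i)"
    by (rule subst_monomial_superset[OF _ keys_expo]) simp
  also have "\<dots> = (\<Prod>i<length n. \<sigma> i ^ (n ! i - 1))"
    by (rule prod.cong) (auto simp: lookup_expo)
  finally show ?thesis .
qed

lemma subst_mono_Cons:
  "subst \<sigma> (mono (k # n)) = \<sigma> 0 ^ (k - 1) * subst (\<lambda>j. \<sigma> (Suc j)) (mono n)"
  by (simp add: subst_mono prod.lessThan_Suc_shift del: prod.lessThan_Suc)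

lemma Var_power: "Var i ^ k = Poly_Mapping.single (Poly_Mapping.single i k) 1"
  by (induction k) (simp_all add: Var_def mult_single single_add[symmetric] add.commute)

lemma prod_single_1:
  "(\<Prod>i\<in>I. Poly_Mapping.single (f i) (1::rat)) = Poly_Mapping.single (\<Sum>i\<in>I. f i) 1"
  by (induction I rule: infinite_finite_induct) (simp_all add: mult_single)

lemma subst_Var_mono [simp]: "subst Var (mono n) = mono n"
  by (simp only: subst_mono Var_power prod_single_1) (simp add: mono_def expo_def)

lemma mono_Cons: "mono (k # n) = Var 0 ^ (k - 1) * subst (\<lambda>j. Var (Suc j)) (mono n)"
  using subst_mono_Cons[of Var k n] by simp

lemma expo_inj:
  assumes "length m = length n" "\<forall>i<length m. m ! i \<ge> 1" "\<forall>i<length n. n ! i \<ge> 1"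
    and "expo m = expo n"
  shows "m = n"
proof (rule nth_equalityI)
  fix i assume "i < length m"
  moreover have "Poly_Mapping.lookup (expo m) i = Poly_Mapping.lookup (expo n) i"
    using assms(4) by simp
  ultimately show "m ! i = n ! i"
    using assms(1-3) by (simp add: lookup_expo) (metis One_nat_def Suc_pred' less_eq_Suc_le)
qed fact

lemma finite_S: "finite (S N r)"
proof (rule finite_subset)
  show "S N r \<subseteq> {xs. set xs \<subseteq> {..N} \<and> length xs = r}"
    by (auto simp: S_def elem_le_sum_list in_set_conv_nth)
qed (rule finite_lists_length_eq, simp)

lemma expo_inj_on_S: "inj_on expo (S N r)"
  by (rule inj_onI, rule expo_inj) (auto simp: S_def)

lemma V_eq_sum_mono:
  assumes "P \<in> V N r"
  shows "P = (\<Sum>m\<in>S N r. Const (piv P m) * mono m)"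
proof (rule poly_mapping_eqI)
  fix k
  have sum_eq: "Poly_Mapping.lookup (\<Sum>m\<in>S N r. Const (piv P m) * mono m) k
      = (\<Sum>m\<in>S N r. if expo m = k then piv P m else 0)"
    by (simp add: lookup_sum lookup_Const_mult mono_def lookup_single when_def) (rule sum.cong; simp)
  show "Poly_Mapping.lookup P k = Poly_Mapping.lookup (\<Sum>m\<in>S N r. Const (piv P m) * mono m) k"
  proof (cases "k \<in> expo ` S N r")
    case True
    then obtain m0 where m0: "m0 \<in> S N r" "k = expo m0" by auto
    have "(\<Sum>m\<in>S N r. if expo m = k then piv P m else 0) = (\<Sum>m\<in>S N r. if m = m0 then piv P m else 0)"
      using m0 inj_onD[OF expo_inj_on_S] by (intro sum.cong) auto
    then show ?thesis
      using sum_eq m0 finite_S by (simp add: piv_def)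
  next
    case False
    then have "k \<notin> Poly_Mapping.keys P"
      using assms by (auto simp: V_def)
    moreover have "(\<Sum>m\<in>S N r. if expo m = k then piv P m else 0) = 0"
      using False by (intro sum.neutral) auto
    ultimately show ?thesis
      using sum_eq by (simp add: in_keys_iff)
  qed
qed

lemma subst_V:
  assumes "P \<in> V N r"
  shows "subst \<sigma> P = (\<Sum>m\<in>S N r. Const (piv P m) * subst \<sigma> (mono m))"
  by (subst V_eq_sum_mono[OF assms]) (simp add: subst_sum subst_Const_mult)

text \<open>The first variable occurs in elements of V only to even powers.\<close>

lemma subst_V_neg_Var0:
  assumes "P \<in> V N r" "\<sigma>' 0 = - \<sigma> 0" "\<And>k. k \<noteq> 0 \<Longrightarrow> \<sigma>' k = \<sigma> k"
  shows "subst \<sigma>' P = subst \<sigma> P"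
proof -
  have "\<sigma>' i ^ (m ! i - 1) = \<sigma> i ^ (m ! i - 1)" if "m \<in> S N r" "i < r" for m i
  proof (cases "i = 0")
    case True
    with that have "even (m ! 0 - 1)" by (auto simp: S_def)
    with True show ?thesis using assms(2) by (simp add: power_minus_even)
  qed (simp add: assms(3))
  then show ?thesis
    by (simp add: subst_V[OF assms(1)] subst_mono) (intro sum.cong refl arg_cong[where f = "(*) _"]
        prod.cong, auto simp: S_def)
qed

section \<open>Antisymmetry of elements of W in the first two variables\<close>

definition swap01 :: "nat \<Rightarrow> nat" where
  "swap01 k = (if k = 0 then 1 else if k = 1 then 0 else k)"

lemma W_subst_swap01_Var:
  assumes "P \<in> W N r"
  shows "subst (\<lambda>k. Var (swap01 k)) P = - P"
proof -
  let ?A = "\<lambda>i. if i = 0 then Var 1 - Var 0 else Var i"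
  let ?B = "\<lambda>i::nat. if i = 0 then Var 1 - Var 0 else if i = 1 then Var 0 else Var i"
  let ?swap = "\<lambda>k. Var (swap01 k)"
  have V: "P \<in> V N r" and W_eq: "P = subst ?A P - subst ?B P"
    using assms by (auto simp: W_def)
  have "subst ?swap P = subst (\<lambda>i. subst ?swap (?A i)) P - subst (\<lambda>i. subst ?swap (?B i)) P"
    by (subst W_eq) (simp add: subst_diff subst_subst)
  also have "subst (\<lambda>i. subst ?swap (?A i)) P = subst ?B P"
    by (rule subst_V_neg_Var0[OF V]) (auto simp: subst_diff swap01_def)
  also have "subst (\<lambda>i. subst ?swap (?B i)) P = subst ?A P"
    by (rule subst_V_neg_Var0[OF V]) (auto simp: subst_diff swap01_def)
  also have "subst ?B P - subst ?A P = - P"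
    by (subst (3) W_eq) (rule minus_diff_eq[symmetric])
  finally show ?thesis .
qed

lemma W_subst_swap01:
  assumes "P \<in> W N r"
  shows "subst (\<lambda>k. \<sigma> (swap01 k)) P = - subst \<sigma> P"
proof -
  have "subst (\<lambda>k. \<sigma> (swap01 k)) P = subst \<sigma> (subst (\<lambda>k. Var (swap01 k)) P)"
    by (simp add: subst_subst)
  then show ?thesis
    by (simp add: W_subst_swap01_Var[OF assms] subst_uminus)
qed

section \<open>The Ihara action on monomials\<close>

definition ihara_mono :: "nat list \<Rightarrow> mpoly" where
  "ihara_mono m = ihara (length m) (monom 1 (hd m - 1)) (mono (tl m))"

text \<open>
  With 0-based variables, ihara_plus i sends the first variable to x_(i+1) - x_i and the others, in
  order, to x_1, \<dots>, x_r with x_(i+1) omitted; ihara_minus i omits x_i instead. On x^(m-1) with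
  m_1 - 1 even they produce the two summands with index i of the Ihara action.
\<close>

definition ihara_plus :: "nat \<Rightarrow> nat \<Rightarrow> mpoly" where
  "ihara_plus i k = (if k = 0 then Var i - Var (i - 1) else if k - 1 < i then Var (k - 1) else Var k)"

definition ihara_minus :: "nat \<Rightarrow> nat \<Rightarrow> mpoly" where
  "ihara_minus i k = (if k = 0 then Var i - Var (i - 1) else if k - 1 < i - 1 then Var (k - 1) else Var k)"

lemma upoly_at_monom_1: "upoly_at (monom 1 d) q = q ^ d"
proof -
  have "upoly_at (monom 1 d) q = (\<Sum>k\<le>d. if k = d then q ^ k else 0)"
    unfolding upoly_at_def by (rule sum.cong) (auto simp: degree_monom_eq coeff_monom)
  then show ?thesis
    by simp
qed

lemma ihara_mono_eq_subst:
  assumes "even (k - 1)"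
  shows "ihara_mono (k # n) = mono (k # n)
    + (\<Sum>i\<in>{1..length n}. subst (ihara_plus i) (mono (k # n)) - subst (ihara_minus i) (mono (k # n)))"
proof -
  have plus: "subst (ihara_plus i) (mono (k # n))
      = (Var i - Var (i - 1)) ^ (k - 1) * subst (\<lambda>j. if j < i then Var j else Var (Suc j)) (mono n)" for i
  proof -
    have "(\<lambda>j. ihara_plus i (Suc j)) = (\<lambda>j. if j < i then Var j else Var (Suc j))"
      by (auto simp: ihara_plus_def)
    then show ?thesis
      by (simp add: subst_mono_Cons ihara_plus_def)
  qed
  have minus: "subst (ihara_minus i) (mono (k # n)) = (-1) ^ (k - 1) * (Var (i - 1) - Var i) ^ (k - 1)
      * subst (\<lambda>j. if j < i - 1 then Var j else Var (Suc j)) (mono n)" for i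
  proof -
    have "(\<lambda>j. ihara_minus i (Suc j)) = (\<lambda>j. if j < i - 1 then Var j else Var (Suc j))"
      by (auto simp: ihara_minus_def)
    moreover have "(Var (i - 1) - Var i) ^ (k - 1) = (Var i - Var (i - 1)) ^ (k - 1)"
      using power_minus_even[OF assms, of "Var i - Var (i - 1)"] by simp
    ultimately show ?thesis
      using assms by (simp add: subst_mono_Cons ihara_minus_def)
  qed
  show ?thesis
    unfolding ihara_mono_def ihara_def upoly_at_monom_1 degree_monom_eq[OF one_neq_zero] plus minus
    by (simp add: mono_Cons mult.assoc)
qed

definition shift_vars :: "mpoly \<Rightarrow> mpoly" where
  "shift_vars = subst (\<lambda>j. Var (Suc j))"

definition shift_subst :: "(nat \<Rightarrow> mpoly) \<Rightarrow> nat \<Rightarrow> mpoly" where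
  "shift_subst \<tau> k = (if k = 0 then Var 0 else shift_vars (\<tau> (k - 1)))"

definition shifted_ihara_mono :: "nat list \<Rightarrow> mpoly" where
  "shifted_ihara_mono m = Var 0 ^ (hd m - 1) * shift_vars (ihara_mono (tl m))"

lemma subst_shift_subst_mono_Cons:
  "subst (shift_subst \<tau>) (mono (k # n)) = Var 0 ^ (k - 1) * shift_vars (subst \<tau> (mono n))"
proof -
  have "(\<lambda>j. shift_subst \<tau> (Suc j)) = (\<lambda>j. shift_vars (\<tau> j))"
    by (auto simp: shift_subst_def)
  then show ?thesis
    by (simp add: subst_mono_Cons shift_subst_def shift_vars_def subst_subst)
qed

lemma shifted_ihara_mono_eq_subst:
  assumes "even (l - 1)"
  shows "shifted_ihara_mono (k # l # n) = mono (k # l # n)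
    + (\<Sum>i\<in>{1..length n}. subst (shift_subst (ihara_plus i)) (mono (k # l # n))
                          - subst (shift_subst (ihara_minus i)) (mono (k # l # n)))"
proof -
  have "Var 0 ^ (k - 1) * shift_vars (mono (l # n)) = mono (k # l # n)"
    by (simp add: mono_Cons[of k] shift_vars_def)
  then show ?thesis
    by (simp add: shifted_ihara_mono_def ihara_mono_eq_subst[OF assms] subst_shift_subst_mono_Cons
        shift_vars_def subst_add
        subst_diff subst_sum distrib_left right_diff_distrib sum_distrib_left)
qed

text \<open>Shifting the index-i substitutions gives those of index i + 1 precomposed with the exchange of
  x_1 and x_2; this is where the antisymmetry of elements of W enters.\<close>

lemma shift_subst_ihara_plus:
  "i \<ge> 1 \<Longrightarrow> shift_subst (ihara_plus i) = (\<lambda>k. ihara_plus (Suc i) (swap01 k))"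
  by (rule ext) (auto simp: shift_subst_def ihara_plus_def swap01_def shift_vars_def subst_diff
      Suc_diff_Suc numeral_2_eq_2)

lemma shift_subst_ihara_minus:
  "i \<ge> 1 \<Longrightarrow> shift_subst (ihara_minus i) = (\<lambda>k. ihara_minus (Suc i) (swap01 k))"
  by (rule ext) (auto simp: shift_subst_def ihara_minus_def swap01_def shift_vars_def subst_diff
      Suc_diff_Suc numeral_2_eq_2)

section \<open>The polynomial identity behind the matrix identity\<close>

definition ihara_diff :: "mpoly \<Rightarrow> nat \<Rightarrow> mpoly" where
  "ihara_diff P i = subst (ihara_plus i) P - subst (ihara_minus i) P"

lemma sum_ihara_mono:
  assumes "P \<in> V N r" "r \<ge> 1"
  shows "(\<Sum>m\<in>S N r. Const (piv P m) * ihara_mono m) = P + (\<Sum>i\<in>{1..r - 1}. ihara_diff P i)"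
proof -
  have "Const (piv P m) * ihara_mono m = Const (piv P m) * (mono m
      + (\<Sum>i\<in>{1..r - 1}. subst (ihara_plus i) (mono m) - subst (ihara_minus i) (mono m)))"
    if "m \<in> S N r" for m
  proof -
    have "length m = r" "odd (m ! 0)"
      using that assms(2) by (auto simp: S_def)
    then obtain k n where "m = k # n" "odd k" "length n = r - 1"
      using assms(2) by (cases m) auto
    then show ?thesis
      by (simp add: ihara_mono_eq_subst)
  qed
  then show ?thesis
    by (simp add: ihara_diff_def subst_V[OF assms(1)] V_eq_sum_mono[OF assms(1), symmetric]
        distrib_left right_diff_distrib sum_distrib_left sum.distrib sum_subtractf
        sum.swap[of _ _ "S N r"])
qed

lemma sum_shifted_ihara_mono:
  assumes "P \<in> W N r" "r \<ge> 2"
  shows "(\<Sum>m\<in>S N r. Const (piv P m) * shifted_ihara_mono m)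
    = P - (\<Sum>i\<in>{2..r - 1}. ihara_diff P i)"
proof -
  have V: "P \<in> V N r"
    using assms(1) by (simp add: W_def)
  have "Const (piv P m) * shifted_ihara_mono m = Const (piv P m)
      * (mono m + (\<Sum>i\<in>{1..r - 2}. subst (shift_subst (ihara_plus i)) (mono m)
                                     - subst (shift_subst (ihara_minus i)) (mono m)))"
    if "m \<in> S N r" for m
  proof -
    have "length m = r" "odd (m ! 1)"
      using that assms(2) by (auto simp: S_def)
    then obtain k l n where "m = k # l # n" "odd l" "length n = r - 2"
      using assms(2) by (cases m rule: remdups_adj.cases) auto
    then show ?thesis
      by (simp add: shifted_ihara_mono_eq_subst)
  qed
  then have "(\<Sum>m\<in>S N r. Const (piv P m) * shifted_ihara_mono m)
      = P + (\<Sum>i\<in>{1..r - 2}. subst (shift_subst (ihara_plus i)) P - subst (shift_subst (ihara_minus i)) P)"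
    by (simp add: subst_V[OF V] V_eq_sum_mono[OF V, symmetric]
        distrib_left right_diff_distrib sum_distrib_left sum.distrib sum_subtractf
        sum.swap[of _ _ "S N r"])
  also have "(\<Sum>i\<in>{1..r - 2}. subst (shift_subst (ihara_plus i)) P - subst (shift_subst (ihara_minus i)) P)
      = (\<Sum>i\<in>{1..r - 2}. - ihara_diff P (Suc i))"
    by (intro sum.cong refl)
      (simp add: shift_subst_ihara_plus shift_subst_ihara_minus W_subst_swap01[OF assms(1)] ihara_diff_def)
  also have "\<dots> = - (\<Sum>i\<in>{Suc 1..Suc (r - 2)}. ihara_diff P i)"
    by (simp only: sum.shift_bounds_cl_Suc_ivl sum_negf)
  also have "Suc (r - 2) = r - 1"
    using assms(2) by linarith
  finally show ?thesis
    by (simp only: numeral_2_eq_2 One_nat_def diff_conv_add_uminus)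
qed

lemma ihara_diff_1_W:
  assumes "P \<in> W N r"
  shows "ihara_diff P 1 = - P"
proof -
  let ?A = "\<lambda>i. if i = 0 then Var 1 - Var 0 else Var i"
  let ?B = "\<lambda>i::nat. if i = 0 then Var 1 - Var 0 else if i = 1 then Var 0 else Var i"
  have "ihara_plus 1 = ?B"
    by (rule ext) (simp add: ihara_plus_def)
  moreover have "ihara_minus 1 = ?A"
    by (rule ext) (simp add: ihara_minus_def)
  ultimately have "ihara_diff P 1 = - (subst ?A P - subst ?B P)"
    by (simp only: ihara_diff_def minus_diff_eq)
  also have "subst ?A P - subst ?B P = P"
    using assms by (simp add: W_def)
  finally show ?thesis .
qed

lemma W_ihara_identity:
  assumes "P \<in> W N r" "r \<ge> 2"
  shows "(\<Sum>m\<in>S N r. Const (piv P m) * ihara_mono m)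
    + (\<Sum>m\<in>S N r. Const (piv P m) * shifted_ihara_mono m) = P"
proof -
  have V: "P \<in> V N r"
    using assms(1) by (simp add: W_def)
  have split: "(\<Sum>i\<in>{1..r - 1}. ihara_diff P i) = ihara_diff P 1 + (\<Sum>i\<in>{2..r - 1}. ihara_diff P i)"
    using assms(2) by (subst sum.atLeast_Suc_atMost) (auto simp: numeral_2_eq_2)
  have cancel: "P + (- P + X) + (P - X) = P" for X :: mpoly
    by (simp add: algebra_simps)
  show ?thesis
    unfolding sum_ihara_mono[OF V, OF order_trans[OF one_le_numeral assms(2)]]
      sum_shifted_ihara_mono[OF assms] split ihara_diff_1_W[OF assms(1)]
    by (rule cancel)
qed

section \<open>Comparing coefficients\<close>

definition shift_monomial :: "(nat \<Rightarrow>\<^sub>0 nat) \<Rightarrow> (nat \<Rightarrow>\<^sub>0 nat)" where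
  "shift_monomial a = (\<Sum>i\<in>Poly_Mapping.keys a. Poly_Mapping.single (Suc i) (Poly_Mapping.lookup a i))"

lemma lookup_shift_monomial_0 [simp]: "Poly_Mapping.lookup (shift_monomial a) 0 = 0"
  by (simp add: shift_monomial_def lookup_sum lookup_single)

lemma lookup_shift_monomial_Suc [simp]:
  "Poly_Mapping.lookup (shift_monomial a) (Suc j) = Poly_Mapping.lookup a j"
proof -
  have "Poly_Mapping.lookup (shift_monomial a) (Suc j)
      = (\<Sum>i\<in>Poly_Mapping.keys a. if i = j then Poly_Mapping.lookup a i else 0)"
    unfolding shift_monomial_def lookup_sum by (rule sum.cong) (auto simp: lookup_single when_def)
  then show ?thesis
    by (auto simp: in_keys_iff)
qed

lemma shift_vars_eq_sum_single:
  "shift_vars Q = (\<Sum>a\<in>Poly_Mapping.keys Q. Poly_Mapping.single (shift_monomial a) (Poly_Mapping.lookup Q a))"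
proof -
  have "subst_monomial (\<lambda>j. Var (Suc j)) a = Poly_Mapping.single (shift_monomial a) 1" for a
    by (simp add: subst_monomial_def Var_power prod_single_1 shift_monomial_def)
  then show ?thesis
    by (simp add: shift_vars_def subst_def subst_monomial_def[symmetric] single_eq_Const_mult[symmetric])
qed

lemma lookup_expo_Cons_0 [simp]: "Poly_Mapping.lookup (expo (k # n)) 0 = k - 1"
  by (simp add: lookup_expo)

lemma lookup_expo_Cons_Suc [simp]: "Poly_Mapping.lookup (expo (k # n)) (Suc j) = Poly_Mapping.lookup (expo n) j"
  by (simp add: lookup_expo)

lemma single_0_add_shift_monomial_eq_expo_Cons:
  "Poly_Mapping.single 0 d + shift_monomial a = expo (k # n) \<longleftrightarrow> d = k - 1 \<and> a = expo n"
    (is "?lhs \<longleftrightarrow> ?rhs")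
proof
  assume ?lhs
  then have "Poly_Mapping.lookup (Poly_Mapping.single 0 d + shift_monomial a) j
      = Poly_Mapping.lookup (expo (k # n)) j" for j
    by simp
  from this[of 0] this[of "Suc _"] show ?rhs
    by (auto simp: lookup_add lookup_single intro: poly_mapping_eqI)
next
  assume ?rhs
  show ?lhs
  proof (rule poly_mapping_eqI)
    fix j
    show "Poly_Mapping.lookup (Poly_Mapping.single 0 d + shift_monomial a) j = Poly_Mapping.lookup (expo (k # n)) j"
      using \<open>?rhs\<close> by (cases j) (simp_all add: lookup_add lookup_single)
  qed
qed

lemma lookup_Var0_power_mult_shift_vars:
  "Poly_Mapping.lookup (Var 0 ^ d * shift_vars Q) (expo (k # n))
     = (if d = k - 1 then Poly_Mapping.lookup Q (expo n) else 0)"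
proof -
  have "Var 0 ^ d * shift_vars Q = (\<Sum>a\<in>Poly_Mapping.keys Q.
      Poly_Mapping.single (Poly_Mapping.single 0 d + shift_monomial a) (Poly_Mapping.lookup Q a))"
    by (simp add: shift_vars_eq_sum_single Var_power sum_distrib_left mult_single)
  then have "Poly_Mapping.lookup (Var 0 ^ d * shift_vars Q) (expo (k # n))
      = (\<Sum>a\<in>Poly_Mapping.keys Q. if d = k - 1 \<and> a = expo n then Poly_Mapping.lookup Q a else 0)"
    by (simp add: lookup_sum lookup_single when_def single_0_add_shift_monomial_eq_expo_Cons)
  then show ?thesis
    by (auto simp: in_keys_iff)
qed

lemma Ej_last_eq_lookup:
  assumes "r \<ge> 2" "m \<in> S N r" "n \<in> S N r"
  shows "Ej r (r - 1) m n = Poly_Mapping.lookup (shifted_ihara_mono m) (expo n)"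
proof -
  have "length m = r" "length n = r" "3 \<le> m ! 0" "3 \<le> n ! 0"
    using assms by (auto simp: S_def)
  then obtain k m' l n' where mn: "m = k # m'" "n = l # n'" "k \<ge> 1" "l \<ge> 1"
    using assms(1) by (cases m; cases n) auto
  moreover have "r - (r - 1) = 1" "k - 1 = l - 1 \<longleftrightarrow> k = l"
    using assms(1) mn by auto
  ultimately show ?thesis
    by (simp add: Ej_def e_def ihara_mono_def shifted_ihara_mono_def lookup_Var0_power_mult_shift_vars)
qed

lemma vecmat_eq_lookup_sum:
  assumes "\<And>m. m \<in> S N r \<Longrightarrow> M m n = Poly_Mapping.lookup (Q m) k"
  shows "vecmat N r v M n = Poly_Mapping.lookup (\<Sum>m\<in>S N r. Const (v m) * Q m) k"
  using assms by (simp add: vecmat_def lookup_sum lookup_Const_mult)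

lemma vecmat_Fmat:
  assumes "n \<in> S N r"
  shows "vecmat N r v Fmat n = vecmat N r v Emat n - v n"
proof -
  have "vecmat N r v Fmat n = vecmat N r v Emat n - (\<Sum>m\<in>S N r. if m = n then v m else 0)"
    unfolding vecmat_def Fmat_def by (simp add: right_diff_distrib sum_subtractf) (rule sum.cong; simp)
  with assms finite_S show ?thesis
    by simp
qed

theorem lemma4p9:
  fixes N r :: nat and P :: mpoly
  assumes "N \<ge> 1" and "r \<ge> 3" and "P \<in> W N r"
  shows "\<forall>n\<in>S N r. vecmat N r (piv (- P)) (Ej r (r - 1)) n = vecmat N r (piv P) Fmat n"
proof
  fix n assume n: "n \<in> S N r"
  have r: "r \<ge> 2"
    using assms(2) by simp
  have "vecmat N r (piv (- P)) (Ej r (r - 1)) n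
      = - Poly_Mapping.lookup (\<Sum>m\<in>S N r. Const (piv P m) * shifted_ihara_mono m) (expo n)"
    using Ej_last_eq_lookup[OF r _ n]
    by (simp add: vecmat_eq_lookup_sum[where k = "expo n"] lookup_sum lookup_Const_mult piv_def sum_negf)
  moreover have "vecmat N r (piv P) Emat n
      = Poly_Mapping.lookup (\<Sum>m\<in>S N r. Const (piv P m) * ihara_mono m) (expo n)"
    by (rule vecmat_eq_lookup_sum) (simp add: Emat_def e_def ihara_mono_def)
  moreover have "Poly_Mapping.lookup (\<Sum>m\<in>S N r. Const (piv P m) * ihara_mono m) (expo n)
      + Poly_Mapping.lookup (\<Sum>m\<in>S N r. Const (piv P m) * shifted_ihara_mono m) (expo n) = piv P n"
    using W_ihara_identity[OF assms(3) r] by (simp add: piv_def flip: lookup_add)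
  ultimately show "vecmat N r (piv (- P)) (Ej r (r - 1)) n = vecmat N r (piv P) Fmat n"
    using n by (simp add: vecmat_Fmat)
qed

end
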